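(* Let $K$ be a field, $S=K[x_1,\dots,x_n]$, $A\subseteq\{1,\dots,n\}$, $f=\prod_{j\in A}x_j$, and let $uK[Z]$ be a Stanley space of $S_f$. Then $H_{uK[Z]}(t)=Q(t)/(1-t)^m$, where $Q(t)$ is a polynomial with $Q(1)=1$ and $m=|Z|$.
   Context: $S_f=K[x_1,\dots,x_n,x_j^{-1}:j\in A]$ with $K$-basis the monomials $x^a=x_1^{a_1}\cdots x_n^{a_n}$, $a_j\in\mathbb Z$ for $j\in A$, $a_j\in\mathbb N$ otherwise. A Stanley space of $S_f$ is $uK[Z]$, the $K$-span of the monomials $uw$ ($w$ a monomial in the elements of $Z$), where $u$ is a monomial of $S_f$, $Z\subseteq\{x_1,\dots,x_n\}\cup\{x_j^{-1}:j\in A\}$ with $\{x_j,x_j^{-1}\}\not\subseteq Z$ for all $j\in A$, and $uK[Z]$ is a free $K[Z]$-module. It is $\mathbb Z^n$-graded with $x^a$ in degree $a$. For such a graded space $M=\bigoplus_aM_a$ with finite-dimensional components, $|a|=\sum_j|a_j|$, $M_d=\bigoplus_{|a|=d}M_a$, $H(M,d)=\dim_KM_d$, $H_M(t)=\sum_{d\ge0}H(M,d)t^d$. *)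

theory Defs
  imports "HOL-Computational_Algebra.Computational_Algebra"
begin

(* Exponent vectors a : nat => int, with variables indexed by {1..n}; a j = 0 outside {1..n}.
   x^a is a monomial of S_f (f = prod_{j in A} x_j) iff a_j >= 0 for j notin A. *)
definition Sf_monomial :: "nat \<Rightarrow> nat set \<Rightarrow> (nat \<Rightarrow> int) \<Rightarrow> bool" where
  "Sf_monomial n A a \<longleftrightarrow> (\<forall>j. j \<notin> {1..n} \<longrightarrow> a j = 0) \<and> (\<forall>j\<in>{1..n}. j \<notin> A \<longrightarrow> a j \<ge> 0)"

(* Variables of S_f: (j, True) stands for x_j (1 <= j <= n), (j, False) for x_j^{-1} (j in A). *)
definition Sf_vars :: "nat \<Rightarrow> nat set \<Rightarrow> (nat \<times> bool) set" where
  "Sf_vars n A = {(j, True) | j. j \<in> {1..n}} \<union> {(j, False) | j. j \<in> A}"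

definition var_exp :: "nat \<times> bool \<Rightarrow> nat \<Rightarrow> int" where
  "var_exp z i = (if i = fst z then (if snd z then 1 else -1) else 0)"

definition stanley_exp :: "(nat \<Rightarrow> int) \<Rightarrow> (nat \<times> bool) set \<Rightarrow> (nat \<times> bool \<Rightarrow> nat) \<Rightarrow> nat \<Rightarrow> int" where
  "stanley_exp u Z c = (\<lambda>i. u i + (\<Sum>z\<in>Z. int (c z) * var_exp z i))"

definition Z_monomials :: "(nat \<times> bool) set \<Rightarrow> (nat \<times> bool \<Rightarrow> nat) set" where
  "Z_monomials Z = {c. \<forall>z. z \<notin> Z \<longrightarrow> c z = 0}"

(* the K-basis of uK[Z]: exponents of the monomials u w *)
definition stanley_monomials :: "(nat \<Rightarrow> int) \<Rightarrow> (nat \<times> bool) set \<Rightarrow> (nat \<Rightarrow> int) set" where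
  "stanley_monomials u Z = stanley_exp u Z ` Z_monomials Z"

(* uK[Z] is a Stanley space of S_f; freeness as K[Z]-module = the monomials u w are pairwise distinct *)
definition is_stanley_space :: "nat \<Rightarrow> nat set \<Rightarrow> (nat \<Rightarrow> int) \<Rightarrow> (nat \<times> bool) set \<Rightarrow> bool" where
  "is_stanley_space n A u Z \<longleftrightarrow>
     A \<subseteq> {1..n} \<and> Sf_monomial n A u \<and> Z \<subseteq> Sf_vars n A \<and>
     (\<forall>j\<in>A. \<not> ((j, True) \<in> Z \<and> (j, False) \<in> Z)) \<and>
     inj_on (stanley_exp u Z) (Z_monomials Z)"

definition abs_deg :: "nat \<Rightarrow> (nat \<Rightarrow> int) \<Rightarrow> nat" where
  "abs_deg n a = nat (\<Sum>i\<in>{1..n}. \<bar>a i\<bar>)"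

(* H(uK[Z], d) = dim_K of the degree-d part = number of basis monomials with |a| = d *)
definition stanley_hilbert_fun :: "nat \<Rightarrow> (nat \<Rightarrow> int) \<Rightarrow> (nat \<times> bool) set \<Rightarrow> nat \<Rightarrow> nat" where
  "stanley_hilbert_fun n u Z d = card {a \<in> stanley_monomials u Z. abs_deg n a = d}"

definition stanley_hilbert_series :: "nat \<Rightarrow> (nat \<Rightarrow> int) \<Rightarrow> (nat \<times> bool) set \<Rightarrow> int fps" where
  "stanley_hilbert_series n u Z = Abs_fps (\<lambda>d. int (stanley_hilbert_fun n u Z d))"

end

theory Submission
  imports Defs
begin

text \<open>Since no variable of \<open>Z\<close> is repeated (up to inversion), distinct elements of \<open>Z\<close> act on
distinct coordinates. Hence \<open>|a|\<close> for \<open>a = u w\<close> is a constant (from the coordinates untouched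
by \<open>Z\<close>) plus a sum of independent contributions \<open>|u\<^sub>j \<plusminus> k|\<close>, one per element of \<open>Z\<close>. So the
Hilbert series is \<open>t\<^sup>C\<close> times a product of \<open>|Z|\<close> one-variable series
\<open>\<Sum>\<^sub>d #{k. |v + k| = d} t\<^sup>d\<close>, each of which is \<open>t\<^sup>v/(1-t)\<close> for \<open>v \<ge> 0\<close> and
\<open>(1 + t - t\<^sup>N\<^sup>+\<^sup>1)/(1-t)\<close> for \<open>v = -N < 0\<close>; both numerators take the value 1 at \<open>t = 1\<close>.\<close>

definition supp_funs_of_weight :: "'a set \<Rightarrow> ('a \<Rightarrow> nat \<Rightarrow> nat) \<Rightarrow> nat \<Rightarrow> ('a \<Rightarrow> nat) set" where
  "supp_funs_of_weight Z \<phi> d = {c. (\<forall>z. z \<notin> Z \<longrightarrow> c z = 0) \<and> (\<Sum>z\<in>Z. \<phi> z (c z)) = d}"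

lemma supp_funs_of_weight_empty:
  "supp_funs_of_weight {} \<phi> d = (if d = 0 then {\<lambda>_. 0} else {})"
  unfolding supp_funs_of_weight_def by auto

lemma supp_funs_of_weight_insert:
  assumes "finite Z" "j \<notin> Z"
  shows "supp_funs_of_weight (insert j Z) \<phi> d =
    (\<lambda>(k, c). c(j := k)) ` (\<Union>e\<in>{0..d}. {k. \<phi> j k = e} \<times> supp_funs_of_weight Z \<phi> (d - e))"
    (is "?L = ?upd ` ?R")
proof (intro set_eqI iffI)
  fix c assume c: "c \<in> ?L"
  have "(\<Sum>z\<in>Z. \<phi> z ((c(j := 0)) z)) = (\<Sum>z\<in>Z. \<phi> z (c z))"
    using assms by (intro sum.cong) auto
  moreover have "\<phi> j (c j) + (\<Sum>z\<in>Z. \<phi> z (c z)) = d"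
    using c assms unfolding supp_funs_of_weight_def by auto
  ultimately have "(c j, c(j := 0)) \<in> ?R"
    using c unfolding supp_funs_of_weight_def by auto
  then show "c \<in> ?upd ` ?R" by (intro image_eqI[of _ _ "(c j, c(j := 0))"]) auto
next
  fix c assume "c \<in> ?upd ` ?R"
  then obtain k c' where k: "\<phi> j k \<le> d" and c': "c' \<in> supp_funs_of_weight Z \<phi> (d - \<phi> j k)"
    and c: "c = c'(j := k)"
    by auto
  have "(\<Sum>z\<in>Z. \<phi> z (c z)) = (\<Sum>z\<in>Z. \<phi> z (c' z))"
    using assms c by (intro sum.cong) auto
  then show "c \<in> ?L"
    using assms k c' c unfolding supp_funs_of_weight_def by auto
qed

lemma card_supp_funs_of_weight_insert:
  assumes "finite Z" "j \<notin> Z" "\<And>e. finite {k. \<phi> j k = e}"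
    and "\<And>e. finite (supp_funs_of_weight Z \<phi> e)"
  shows "finite (supp_funs_of_weight (insert j Z) \<phi> d)"
    and "card (supp_funs_of_weight (insert j Z) \<phi> d) =
      (\<Sum>e=0..d. card {k. \<phi> j k = e} * card (supp_funs_of_weight Z \<phi> (d - e)))"
proof -
  let ?R = "\<Union>e\<in>{0..d}. {k. \<phi> j k = e} \<times> supp_funs_of_weight Z \<phi> (d - e)"
  have "inj_on (\<lambda>(k, c). c(j := k)) ?R"
  proof (rule inj_onI, clarify)
    fix k c k' c'
    assume "c \<in> supp_funs_of_weight Z \<phi> (d - \<phi> j k)" "c' \<in> supp_funs_of_weight Z \<phi> (d - \<phi> j k')"
      and eq: "c(j := k) = c'(j := k')"
    then have "c j = 0" "c' j = 0"
      using assms(2) unfolding supp_funs_of_weight_def by auto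
    with eq show "k = k' \<and> c = c'"
      by (metis fun_upd_idem fun_upd_same fun_upd_upd)
  qed
  moreover have "finite ?R" using assms(3,4) by blast
  ultimately show "finite (supp_funs_of_weight (insert j Z) \<phi> d)"
    and "card (supp_funs_of_weight (insert j Z) \<phi> d) =
      (\<Sum>e=0..d. card {k. \<phi> j k = e} * card (supp_funs_of_weight Z \<phi> (d - e)))"
    using assms(3,4)
    by (simp_all add: supp_funs_of_weight_insert[OF assms(1,2)] card_image card_UN_disjoint
        card_cartesian_product disjoint_iff)
qed

lemma finite_supp_funs_of_weight:
  assumes "finite Z" "\<And>z d. z \<in> Z \<Longrightarrow> finite {k. \<phi> z k = d}"
  shows "finite (supp_funs_of_weight Z \<phi> d)"
  using assms
proof (induction Z arbitrary: d rule: finite_induct)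
  case empty
  then show ?case by (simp add: supp_funs_of_weight_empty)
next
  case (insert j Z)
  then show ?case by (intro card_supp_funs_of_weight_insert(1)) auto
qed

lemma fps_card_supp_funs_of_weight:
  fixes \<phi> :: "'a \<Rightarrow> nat \<Rightarrow> nat"
  assumes "finite Z" "\<And>z d. z \<in> Z \<Longrightarrow> finite {k. \<phi> z k = d}"
  shows "Abs_fps (\<lambda>d. int (card (supp_funs_of_weight Z \<phi> d))) =
    (\<Prod>z\<in>Z. Abs_fps (\<lambda>d. int (card {k. \<phi> z k = d})))"
  using assms
proof (induction Z rule: finite_induct)
  case empty
  then show ?case by (auto simp: supp_funs_of_weight_empty fps_eq_iff)
next
  case (insert j Z)
  have "Abs_fps (\<lambda>d. int (card (supp_funs_of_weight (insert j Z) \<phi> d))) =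
      Abs_fps (\<lambda>d. int (card {k. \<phi> j k = d})) * Abs_fps (\<lambda>d. int (card (supp_funs_of_weight Z \<phi> d)))"
    using insert by (simp add: fps_eq_iff fps_mult_nth card_supp_funs_of_weight_insert(2)
        finite_supp_funs_of_weight)
  then show ?case using insert by simp
qed

lemma fps_times_one_minus_X_nth:
  fixes h :: "nat \<Rightarrow> 'a::comm_ring_1"
  shows "(Abs_fps h * (1 - fps_X)) $ d = h d - (if d = 0 then 0 else h (d - 1))"
  by (simp add: right_diff_distrib mult.commute[of "Abs_fps h"] fps_X_mult_nth)

lemma fps_prod_times_one_minus_X_power:
  fixes F :: "'b \<Rightarrow> 'a::comm_ring_1 fps"
  assumes "finite Z" "\<And>z. z \<in> Z \<Longrightarrow> F z * (1 - fps_X) = fps_of_poly (P z)"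
  shows "(\<Prod>z\<in>Z. F z) * (1 - fps_X) ^ card Z = fps_of_poly (\<Prod>z\<in>Z. P z)"
proof -
  have "(\<Prod>z\<in>Z. F z) * (1 - fps_X) ^ card Z = (\<Prod>z\<in>Z. F z * (1 - fps_X))"
    by (simp add: prod.distrib)
  also have "\<dots> = fps_of_poly (\<Prod>z\<in>Z. P z)"
    using assms(2) by (simp add: fps_of_poly_prod)
  finally show ?thesis .
qed

lemma abs_shift_fiber_nonneg:
  assumes "v \<ge> 0"
  shows "{k::nat. nat \<bar>v + int k\<bar> = d} = (if nat v \<le> d then {d - nat v} else {})"
  using assms by auto

lemma abs_shift_fiber_neg:
  assumes "v = - int N"
  shows "{k::nat. nat \<bar>v + int k\<bar> = d} =
    (if d = 0 then {N} else if d \<le> N then {N - d, N + d} else {N + d})"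
  using assms by auto

lemma finite_abs_shift_fiber: "finite {k::nat. nat \<bar>v + int k\<bar> = d}"
  by (rule finite_subset[of _ "{..d + nat \<bar>v\<bar>}"]) auto

lemma fps_card_abs_shift_fiber:
  fixes v :: int
  obtains P :: "int poly" where "poly P 1 = 1"
    and "Abs_fps (\<lambda>d. int (card {k::nat. nat \<bar>v + int k\<bar> = d})) * (1 - fps_X) = fps_of_poly P"
proof (cases "v \<ge> 0")
  case True
  have "Abs_fps (\<lambda>d. int (card {k::nat. nat \<bar>v + int k\<bar> = d})) * (1 - fps_X) =
      fps_of_poly (monom 1 (nat v))"
    unfolding fps_eq_iff fps_times_one_minus_X_nth abs_shift_fiber_nonneg[OF True]
    by (auto simp: coeff_monom)
  then show ?thesis by (intro that[of "monom 1 (nat v)"]) (simp_all add: poly_monom)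
next
  case False
  define N where "N = nat (- v)"
  have v: "v = - int N" "N \<ge> 1" using False unfolding N_def by auto
  define P :: "int poly" where "P = 1 + monom 1 1 - monom 1 (N + 1)"
  have "Abs_fps (\<lambda>d. int (card {k::nat. nat \<bar>v + int k\<bar> = d})) * (1 - fps_X) = fps_of_poly P"
    unfolding fps_eq_iff fps_times_one_minus_X_nth abs_shift_fiber_neg[OF v(1)]
    using v(2) by (auto simp: P_def coeff_monom)
  then show ?thesis by (intro that[of P]) (simp_all add: P_def poly_monom)
qed

definition var_abs_exp :: "(nat \<Rightarrow> int) \<Rightarrow> nat \<times> bool \<Rightarrow> nat \<Rightarrow> nat" where
  "var_abs_exp u z k = nat \<bar>u (fst z) + int k * var_exp z (fst z)\<bar>"

definition fixed_abs_deg :: "nat \<Rightarrow> (nat \<Rightarrow> int) \<Rightarrow> (nat \<times> bool) set \<Rightarrow> nat" where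
  "fixed_abs_deg n u Z = nat (\<Sum>i\<in>{1..n} - fst ` Z. \<bar>u i\<bar>)"

lemma var_abs_exp_eq_abs_shift: "var_abs_exp u z k = nat \<bar>u (fst z) * var_exp z (fst z) + int k\<bar>"
proof -
  have "\<bar>u (fst z) + int k * var_exp z (fst z)\<bar> = \<bar>u (fst z) * var_exp z (fst z) + int k\<bar>"
    by (cases "snd z") (simp_all add: var_exp_def abs_minus_commute)
  then show ?thesis unfolding var_abs_exp_def by simp
qed

lemma stanley_space_vars:
  assumes "is_stanley_space n A u Z"
  shows "fst ` Z \<subseteq> {1..n}" and "finite Z" and "inj_on fst Z"
proof -
  have Z: "Z \<subseteq> Sf_vars n A" "A \<subseteq> {1..n}" "\<forall>j\<in>A. \<not> ((j, True) \<in> Z \<and> (j, False) \<in> Z)"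
    using assms unfolding is_stanley_space_def by auto
  then show "fst ` Z \<subseteq> {1..n}" unfolding Sf_vars_def by force
  then have "Z \<subseteq> {1..n} \<times> UNIV" by force
  then show "finite Z" by (rule finite_subset) simp
  show "inj_on fst Z"
  proof (rule inj_onI)
    fix x y assume "x \<in> Z" "y \<in> Z" "fst x = fst y"
    moreover have "(j, False) \<in> Z \<Longrightarrow> j \<in> A" for j using Z(1) unfolding Sf_vars_def by auto
    ultimately show "x = y" using Z(3) by (cases x; cases y; cases "snd x"; cases "snd y") auto
  qed
qed

lemma stanley_exp_at_var:
  assumes "finite Z" "inj_on fst Z" "z \<in> Z"
  shows "stanley_exp u Z c (fst z) = u (fst z) + int (c z) * var_exp z (fst z)"
proof -
  have "(\<Sum>y\<in>Z - {z}. int (c y) * var_exp y (fst z)) = 0"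
    using assms(2,3) by (intro sum.neutral) (auto simp: var_exp_def dest: inj_onD)
  then show ?thesis
    using assms(1,3) by (simp add: stanley_exp_def sum.remove)
qed

lemma stanley_exp_off_vars:
  assumes "i \<notin> fst ` Z"
  shows "stanley_exp u Z c i = u i"
  using assms by (force simp: stanley_exp_def var_exp_def intro!: sum.neutral)

lemma abs_deg_stanley_exp:
  assumes "is_stanley_space n A u Z"
  shows "abs_deg n (stanley_exp u Z c) = fixed_abs_deg n u Z + (\<Sum>z\<in>Z. var_abs_exp u z (c z))"
proof -
  note Z = stanley_space_vars[OF assms]
  have "(\<Sum>i\<in>{1..n}. \<bar>stanley_exp u Z c i\<bar>) =
      (\<Sum>i\<in>{1..n} - fst ` Z. \<bar>stanley_exp u Z c i\<bar>) + (\<Sum>i\<in>fst ` Z. \<bar>stanley_exp u Z c i\<bar>)"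
    using sum.subset_diff[OF Z(1)] by simp
  also have "\<dots> = (\<Sum>i\<in>{1..n} - fst ` Z. \<bar>u i\<bar>) + (\<Sum>z\<in>Z. \<bar>stanley_exp u Z c (fst z)\<bar>)"
    by (simp add: stanley_exp_off_vars sum.reindex[OF Z(3)])
  also have "(\<Sum>z\<in>Z. \<bar>stanley_exp u Z c (fst z)\<bar>) = int (\<Sum>z\<in>Z. var_abs_exp u z (c z))"
    by (simp add: stanley_exp_at_var[OF Z(2,3)] var_abs_exp_def)
  finally show ?thesis
    unfolding abs_deg_def fixed_abs_deg_def by (simp add: nat_add_distrib sum_nonneg del: of_nat_sum)
qed

lemma stanley_hilbert_series_eq:
  assumes "is_stanley_space n A u Z"
  shows "stanley_hilbert_series n u Z =
    fps_X ^ fixed_abs_deg n u Z * (\<Prod>z\<in>Z. Abs_fps (\<lambda>d. int (card {k. var_abs_exp u z k = d})))"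
proof -
  let ?C = "fixed_abs_deg n u Z"
  have inj: "inj_on (stanley_exp u Z) (Z_monomials Z)"
    using assms unfolding is_stanley_space_def by blast
  have "stanley_hilbert_fun n u Z d =
      card (if ?C \<le> d then supp_funs_of_weight Z (var_abs_exp u) (d - ?C) else {})" for d
  proof -
    have "{a \<in> stanley_monomials u Z. abs_deg n a = d} =
        stanley_exp u Z ` {c \<in> Z_monomials Z. abs_deg n (stanley_exp u Z c) = d}"
      unfolding stanley_monomials_def by blast
    then have "stanley_hilbert_fun n u Z d =
        card {c \<in> Z_monomials Z. abs_deg n (stanley_exp u Z c) = d}"
      unfolding stanley_hilbert_fun_def by (simp add: card_image inj_on_subset[OF inj])
    also have "{c \<in> Z_monomials Z. abs_deg n (stanley_exp u Z c) = d} =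
        (if ?C \<le> d then supp_funs_of_weight Z (var_abs_exp u) (d - ?C) else {})"
      unfolding abs_deg_stanley_exp[OF assms] supp_funs_of_weight_def Z_monomials_def by auto
    finally show ?thesis .
  qed
  then have "stanley_hilbert_series n u Z =
      fps_X ^ ?C * Abs_fps (\<lambda>d. int (card (supp_funs_of_weight Z (var_abs_exp u) d)))"
    unfolding stanley_hilbert_series_def fps_eq_iff fps_X_power_mult_nth by simp
  also have "\<dots> = fps_X ^ ?C * (\<Prod>z\<in>Z. Abs_fps (\<lambda>d. int (card {k. var_abs_exp u z k = d})))"
    using fps_card_supp_funs_of_weight[OF stanley_space_vars(2)[OF assms]]
    by (simp add: var_abs_exp_eq_abs_shift finite_abs_shift_fiber)
  finally show ?thesis .
qed

theorem lemma6p4: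
  fixes n :: nat and A :: "nat set" and u :: "nat \<Rightarrow> int" and Z :: "(nat \<times> bool) set"
  assumes "is_stanley_space n A u Z"
  shows "\<exists>Q :: int poly. poly Q 1 = 1 \<and>
           stanley_hilbert_series n u Z * (1 - fps_X) ^ card Z = fps_of_poly Q"
proof -
  let ?F = "\<lambda>z. Abs_fps (\<lambda>d. int (card {k. var_abs_exp u z k = d}))"
  have "\<exists>P. poly P 1 = (1::int) \<and> ?F z * (1 - fps_X) = fps_of_poly P" for z
    by (rule fps_card_abs_shift_fiber[of "u (fst z) * var_exp z (fst z)"])
      (auto simp: var_abs_exp_eq_abs_shift)
  then obtain P where P: "\<And>z. poly (P z) 1 = (1::int)" "\<And>z. ?F z * (1 - fps_X) = fps_of_poly (P z)"
    by metis
  let ?C = "fixed_abs_deg n u Z"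
  have "stanley_hilbert_series n u Z * (1 - fps_X) ^ card Z =
      fps_X ^ ?C * ((\<Prod>z\<in>Z. ?F z) * (1 - fps_X) ^ card Z)"
    by (simp add: stanley_hilbert_series_eq[OF assms] mult.assoc)
  also have "\<dots> = fps_of_poly (monom 1 ?C * (\<Prod>z\<in>Z. P z))"
    using fps_prod_times_one_minus_X_power[OF stanley_space_vars(2)[OF assms] P(2)]
    by (simp add: fps_of_poly_mult fps_of_poly_monom')
  finally show ?thesis
    by (intro exI[of _ "monom 1 ?C * (\<Prod>z\<in>Z. P z)"]) (simp add: poly_monom poly_prod P(1))
qed

end
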